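(* For any two finite integer sequences $A$ and $B$, $\mathrm{lcis}(\mathrm{inflate}(A),\mathrm{inflate}(B))=2\cdot\mathrm{lcis}(A,B)$.
   Context: For integer sequences, $\mathrm{lcis}(X_1,\dots,X_k)$ denotes the length of the longest strictly increasing sequence that is a subsequence of each $X_i$. For $A=\langle a_0,\dots,a_{n-1}\rangle$, $\mathrm{inflate}(A)=\langle 2a_0-1,2a_0,2a_1-1,2a_1,\dots,2a_{n-1}-1,2a_{n-1}\rangle$. *)

theory Defs
  imports Main "HOL-Library.Sublist"
begin

definition is_cis :: "int list list \<Rightarrow> int list \<Rightarrow> bool" where
  "is_cis Xs zs \<longleftrightarrow> sorted_wrt (<) zs \<and> (\<forall>X\<in>set Xs. subseq zs X)"

(* length of a longest common increasing subsequence; the set is finite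
   and nonempty (contains []) whenever Xs is nonempty *)
definition lcis :: "int list list \<Rightarrow> nat" where
  "lcis Xs = Max (length ` {zs. is_cis Xs zs})"

definition inflate :: "int list \<Rightarrow> int list" where
  "inflate A = concat (map (\<lambda>a. [2*a - 1, 2*a]) A)"

end

theory Submission
  imports Defs
begin

(* Inflating a common increasing subsequence gives one of twice the length, so
   lcis at least doubles. Conversely, rounding w to half_up w = \<lceil>w/2\<rceil> maps
   inflate A onto A with every entry doubled; applied to a strictly increasing
   common subsequence of the inflated lists, it yields a weakly increasing list
   in which no value occurs more than twice (half_up is two-to-one), and merging
   its adjacent repetitions gives a common increasing subsequence of the
   original lists of at least half the length. *)

definition half_up :: "int \<Rightarrow> int" where
  "half_up w = (w + 1) div 2"

lemma mono_half_up: "mono half_up"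
  unfolding half_up_def by (rule monoI) (simp add: zdiv_mono1)

definition deflate :: "int list \<Rightarrow> int list" where
  "deflate ws = remdups_adj (map half_up ws)"

lemma inflate_Nil [simp]: "inflate [] = []"
  by (simp add: inflate_def)

lemma inflate_Cons [simp]: "inflate (a # A) = (2 * a - 1) # 2 * a # inflate A"
  by (simp add: inflate_def)

lemma length_inflate [simp]: "length (inflate A) = 2 * length A"
  by (induction A) simp_all

lemma set_inflate: "set (inflate A) = (\<lambda>a. 2 * a - 1) ` set A \<union> (\<lambda>a. 2 * a) ` set A"
  by (induction A) auto

lemma subseq_concat_map: "subseq xs ys \<Longrightarrow> subseq (concat (map f xs)) (concat (map f ys))"
  by (induction rule: list_emb.induct) (auto intro: list_emb_append_mono subseq_drop_many)

lemma subseq_inflate: "subseq xs ys \<Longrightarrow> subseq (inflate xs) (inflate ys)"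
  unfolding inflate_def by (rule subseq_concat_map)

lemma sorted_inflate: "sorted_wrt (<) A \<Longrightarrow> sorted_wrt (<) (inflate A)"
  by (induction A) (auto simp: set_inflate)

lemma map_half_up_inflate: "map half_up (inflate A) = concat (map (replicate 2) A)"
  by (induction A) (simp_all add: half_up_def numeral_2_eq_2)

lemma subseq_remdups_adj_replicate_append:
  assumes "subseq (remdups_adj xs) ys"
  shows "subseq (remdups_adj (replicate m a @ xs)) (a # ys)"
proof (induction m)
  case 0
  show ?case using assms by (simp add: list_emb.list_emb_Cons)
next
  case (Suc m)
  then show ?case
    by (auto simp: remdups_adj_Cons split: list.split dest: subseq_Cons2_neq)
qed

lemma subseq_remdups_adj_concat_replicate:
  "subseq xs (concat (map (replicate k) A)) \<Longrightarrow> subseq (remdups_adj xs) A"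
proof (induction A arbitrary: xs)
  case Nil
  then have "xs = []" by (simp add: list_emb_Nil2)
  then show ?case by simp
next
  case (Cons a A)
  then obtain us vs where "xs = us @ vs" "subseq us (replicate k a)"
    and vs: "subseq vs (concat (map (replicate k) A))"
    by (auto elim: subseq_appendE)
  moreover have "us = replicate (length us) a"
    using \<open>subseq us (replicate k a)\<close> by (intro replicate_eqI refl) (fastforce elim: list_emb_set)
  ultimately show ?case
    using Cons.IH[OF vs] subseq_remdups_adj_replicate_append by metis
qed

lemma sorted_wrt_less_remdups_adj: "sorted xs \<Longrightarrow> sorted_wrt (<) (remdups_adj xs)"
  by (induction xs rule: remdups_adj.induct) auto

lemma card_le_twice_card_half_up_image:
  assumes "finite S"
  shows "card S \<le> 2 * card (half_up ` S)"
proof -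
  let ?D = "half_up ` S"
  have "S \<subseteq> (\<lambda>a. 2 * a - 1) ` ?D \<union> (\<lambda>a. 2 * a) ` ?D"
  proof
    fix w assume "w \<in> S"
    moreover have "w = 2 * half_up w - 1 \<or> w = 2 * half_up w"
      unfolding half_up_def by presburger
    ultimately show "w \<in> (\<lambda>a. 2 * a - 1) ` ?D \<union> (\<lambda>a. 2 * a) ` ?D"
      by blast
  qed
  then have "card S \<le> card ((\<lambda>a. 2 * a - 1) ` ?D) + card ((\<lambda>a. 2 * a) ` ?D)"
    using assms by (meson card_Un_le card_mono finite_UnI finite_imageI order_trans)
  also have "\<dots> \<le> 2 * card ?D"
    using assms card_image_le[of ?D] by (metis add_mono finite_imageI mult_2)
  finally show ?thesis .
qed

lemma length_le_twice_length_deflate: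
  assumes "distinct ws"
  shows "length ws \<le> 2 * length (deflate ws)"
proof -
  have "length ws = card (set ws)"
    using assms by (simp add: distinct_card)
  also have "\<dots> \<le> 2 * card (set (deflate ws))"
    by (simp add: deflate_def card_le_twice_card_half_up_image)
  also have "\<dots> \<le> 2 * length (deflate ws)"
    by (simp add: card_length)
  finally show ?thesis .
qed

lemma is_cis_deflate:
  assumes "is_cis (map inflate Xs) ws"
  shows "is_cis Xs (deflate ws)"
proof -
  have "sorted_wrt (<) ws"
    using assms by (simp add: is_cis_def)
  then have "sorted (map half_up ws)"
    unfolding sorted_wrt_map
    by (rule sorted_wrt_mono_rel[rotated]) (simp add: mono_half_up[THEN monoD])
  then have "sorted_wrt (<) (deflate ws)"
    unfolding deflate_def by (rule sorted_wrt_less_remdups_adj)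
  moreover have "subseq (deflate ws) X" if "X \<in> set Xs" for X
  proof -
    have "subseq (map half_up ws) (concat (map (replicate 2) X))"
      using assms that unfolding is_cis_def
      by (metis image_eqI list.set_map map_half_up_inflate subseq_map)
    then show ?thesis
      unfolding deflate_def by (rule subseq_remdups_adj_concat_replicate)
  qed
  ultimately show ?thesis
    unfolding is_cis_def by blast
qed

lemma is_cis_inflate: "is_cis Xs zs \<Longrightarrow> is_cis (map inflate Xs) (inflate zs)"
  unfolding is_cis_def by (auto intro: sorted_inflate subseq_inflate)

lemma finite_lengths_is_cis:
  assumes "Xs \<noteq> []"
  shows "finite (length ` {zs. is_cis Xs zs})"
proof -
  obtain X where "X \<in> set Xs"
    using assms by (cases Xs) auto
  then have "length ` {zs. is_cis Xs zs} \<subseteq> {..length X}"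
    by (auto simp: is_cis_def dest!: list_emb_length)
  then show ?thesis
    using finite_subset by blast
qed

lemma is_cis_length_le_lcis: "Xs \<noteq> [] \<Longrightarrow> is_cis Xs zs \<Longrightarrow> length zs \<le> lcis Xs"
  unfolding lcis_def by (auto intro: Max_ge finite_lengths_is_cis)

lemma lcis_obtains_is_cis:
  assumes "Xs \<noteq> []"
  obtains zs where "is_cis Xs zs" "length zs = lcis Xs"
proof -
  have "is_cis Xs []"
    by (simp add: is_cis_def)
  then have "length ` {zs. is_cis Xs zs} \<noteq> {}"
    by blast
  then show ?thesis
    using that Max_in[OF finite_lengths_is_cis[OF assms]] unfolding lcis_def by auto
qed

lemma lcis_map_inflate:
  assumes "Xs \<noteq> []"
  shows "lcis (map inflate Xs) = 2 * lcis Xs"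
proof (rule antisym)
  have Xs': "map inflate Xs \<noteq> []"
    using assms by simp
  obtain ws where ws: "is_cis (map inflate Xs) ws" "length ws = lcis (map inflate Xs)"
    using lcis_obtains_is_cis[OF Xs'] .
  have "distinct ws"
    using ws(1) by (simp add: is_cis_def strict_sorted_iff)
  then have "length ws \<le> 2 * length (deflate ws)"
    by (rule length_le_twice_length_deflate)
  also have "\<dots> \<le> 2 * lcis Xs"
    using is_cis_length_le_lcis[OF assms is_cis_deflate[OF ws(1)]] by simp
  finally show "lcis (map inflate Xs) \<le> 2 * lcis Xs"
    using ws(2) by simp
  obtain zs where zs: "is_cis Xs zs" "length zs = lcis Xs"
    using lcis_obtains_is_cis[OF assms] .
  show "2 * lcis Xs \<le> lcis (map inflate Xs)"
    using is_cis_length_le_lcis[OF Xs' is_cis_inflate[OF zs(1)]] zs(2) by simp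
qed

theorem lemma9:
  fixes A B :: "int list"
  shows "lcis [inflate A, inflate B] = 2 * lcis [A, B]"
  using lcis_map_inflate[of "[A, B]"] by simp

end
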